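(* Let $(G_n)_{n\in\mathbb N}$ be an increasing sequence of subgroups of $\mathrm{Diff}^1_+([0,1])$ (i.e. $G_n\subset G_{n+1}$ for all $n$). Assume that every $G_n$ is finitely generated and $C^1$-close to the identity. Then $G=\bigcup_{n\in\mathbb N}G_n$ is $C^1$-close to the identity.
   Context: A group $G\subset \mathrm{Diff}^1_+([0,1])$ is $C^1$-close to the identity if there is a sequence $h_n\in \mathrm{Diff}^1_+([0,1])$ such that $h_n g h_n^{-1}\to \mathrm{id}$ in the $C^1$-topology as $n\to\infty$, for every $g\in G$. *)

theory Defs
  imports "HOL-Analysis.Analysis"
begin

text \<open>Convention: an element of Diff^1_+([0,1]) is represented as a function
  real => real that is the identity outside [0,1]; thus equality of such
  functions is equality on [0,1], composition is composition, and the group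
  inverse is the HOL inverse inv.\<close>

definition diff1p :: "(real \<Rightarrow> real) \<Rightarrow> bool" where
  "diff1p f \<longleftrightarrow>
     (\<forall>x. x \<notin> {0..1} \<longrightarrow> f x = x) \<and>
     bij_betw f {0..1} {0..1} \<and> strict_mono_on {0..1} f \<and>
     (\<exists>f'. continuous_on {0..1} f' \<and>
        (\<forall>x\<in>{0..1}. (f has_real_derivative f' x) (at x within {0..1}) \<and> f' x > 0))"

definition D01 :: "(real \<Rightarrow> real) \<Rightarrow> real \<Rightarrow> real" where
  "D01 f x = vector_derivative f (at x within {0..1})"

definition diff_subgroup :: "(real \<Rightarrow> real) set \<Rightarrow> bool" where
  "diff_subgroup G \<longleftrightarrow> G \<subseteq> Collect diff1p \<and> id \<in> G \<and>
     (\<forall>f\<in>G. \<forall>g\<in>G. f \<circ> g \<in> G) \<and> (\<forall>f\<in>G. inv f \<in> G)"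

definition generated_subgroup :: "(real \<Rightarrow> real) set \<Rightarrow> (real \<Rightarrow> real) set" where
  "generated_subgroup S = \<Inter>{H. diff_subgroup H \<and> S \<subseteq> H}"

definition fin_gen :: "(real \<Rightarrow> real) set \<Rightarrow> bool" where
  "fin_gen G \<longleftrightarrow> (\<exists>S. finite S \<and> S \<subseteq> G \<and> G = generated_subgroup S)"

definition C1_to_id :: "(nat \<Rightarrow> real \<Rightarrow> real) \<Rightarrow> bool" where
  "C1_to_id fs \<longleftrightarrow> uniform_limit {0..1} fs id sequentially \<and>
     uniform_limit {0..1} (\<lambda>n. D01 (fs n)) (\<lambda>x. 1) sequentially"

definition C1_close_id :: "(real \<Rightarrow> real) set \<Rightarrow> bool" where
  "C1_close_id G \<longleftrightarrow> (\<exists>h :: nat \<Rightarrow> real \<Rightarrow> real. (\<forall>n. diff1p (h n)) \<and>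
     (\<forall>g\<in>G. C1_to_id (\<lambda>n. h n \<circ> g \<circ> inv (h n))))"

end

theory Submission
  imports Defs
begin

text \<open>A finitely generated subgroup is countable (its elements are words in the
  generators), so the union is countable. For a countable set a diagonal argument applies:
  enumerate it as g_0, g_1, ..., and pick h_k conjugating the finite set {g_0, ..., g_k}, which
  lies in some G_n, to within 1/(k+1) of the identity in C^1; then h_k g h_k^-1 tends to the
  identity for every g in the union.\<close>

lemma diff1p_bij:
  assumes "diff1p f" shows "bij f"
proof -
  have "bij_betw f {0..1} {0..1}" and "bij_betw f (- {0..1}) (- {0..1})"
    using assms bij_betw_cong[of "- {0..1}" f id] unfolding diff1p_def by auto
  then show ?thesis
    using bij_betw_combine[of f "{0..1::real}" "{0..1}" "- {0..1}" "- {0..1}"] by simp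
qed

fun eval_word :: "(bool \<times> (real \<Rightarrow> real)) list \<Rightarrow> real \<Rightarrow> real" where
  "eval_word [] = id"
| "eval_word ((b, f) # w) = (if b then f else inv f) \<circ> eval_word w"

lemma eval_word_append: "eval_word (u @ v) = eval_word u \<circ> eval_word v"
  by (induction u rule: eval_word.induct) (auto simp: o_assoc)

lemma eval_word_in_subgroup:
  assumes "diff_subgroup G" "S \<subseteq> G" "w \<in> lists (UNIV \<times> S)"
  shows "eval_word w \<in> G"
  using assms(3)
proof (induction w rule: eval_word.induct)
  case (2 b f w)
  then have "f \<in> G" "eval_word w \<in> G"
    using assms(2) by auto
  then have "(if b then f else inv f) \<in> G"
    using assms(1) by (simp add: diff_subgroup_def)
  with \<open>eval_word w \<in> G\<close> assms(1) show ?case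
    unfolding diff_subgroup_def eval_word.simps by blast
qed (use assms(1) in \<open>simp add: diff_subgroup_def\<close>)

lemma inv_eval_word:
  assumes "diff_subgroup G" "S \<subseteq> G" "w \<in> lists (UNIV \<times> S)"
  shows "inv (eval_word w) = eval_word (rev (map (\<lambda>(b, f). (\<not> b, f)) w))"
  using assms(3)
proof (induction w rule: eval_word.induct)
  case 1
  then show ?case by (simp add: inv_id)
next
  case (2 b f w)
  then have w: "w \<in> lists (UNIV \<times> S)" and "f \<in> G"
    using assms(2) by auto
  then have "diff1p f" "diff1p (eval_word w)"
    using eval_word_in_subgroup[OF assms(1,2) w] assms(1) by (auto simp: diff_subgroup_def)
  then have "bij f" "bij (eval_word w)"
    by (simp_all add: diff1p_bij)
  then have "bij (if b then f else inv f)"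
    by (simp add: bij_imp_bij_inv)
  then have "inv (eval_word ((b, f) # w)) = inv (eval_word w) \<circ> inv (if b then f else inv f)"
    using \<open>bij (eval_word w)\<close> by (simp only: eval_word.simps o_inv_distrib)
  also have "inv (if b then f else inv f) = (if \<not> b then f else inv f)"
    using \<open>bij f\<close> by (simp add: inv_inv_eq)
  finally show ?case
    using "2.IH" w by (simp only: eval_word_append eval_word.simps rev.simps list.map prod.case
        comp_id append.simps)
qed

lemma diff_subgroup_words:
  assumes "diff_subgroup G" "S \<subseteq> G"
  shows "diff_subgroup (eval_word ` lists (UNIV \<times> S))"
  unfolding diff_subgroup_def
proof (intro conjI ballI)
  show "eval_word ` lists (UNIV \<times> S) \<subseteq> Collect diff1p"
    using eval_word_in_subgroup[OF assms] assms(1) by (auto simp: diff_subgroup_def)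
  show "id \<in> eval_word ` lists (UNIV \<times> S)"
    by (rule image_eqI[of _ _ "[]"]) auto
next
  fix f g assume "f \<in> eval_word ` lists (UNIV \<times> S)" "g \<in> eval_word ` lists (UNIV \<times> S)"
  then obtain u v where "u \<in> lists (UNIV \<times> S)" "v \<in> lists (UNIV \<times> S)"
      "f = eval_word u" "g = eval_word v"
    by auto
  then show "f \<circ> g \<in> eval_word ` lists (UNIV \<times> S)"
    by (intro image_eqI[of _ _ "u @ v"]) (auto simp: eval_word_append)
next
  fix f assume "f \<in> eval_word ` lists (UNIV \<times> S)"
  then obtain u where "u \<in> lists (UNIV \<times> S)" "f = eval_word u"
    by auto
  then show "inv f \<in> eval_word ` lists (UNIV \<times> S)"
    by (intro image_eqI[of _ _ "rev (map (\<lambda>(b, f). (\<not> b, f)) u)"])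
      (auto simp: inv_eval_word[OF assms])
qed

lemma countable_fin_gen:
  assumes "diff_subgroup G" "fin_gen G"
  shows "countable G"
proof -
  obtain S where S: "finite S" "S \<subseteq> G" "G = generated_subgroup S"
    using assms(2) unfolding fin_gen_def by auto
  have "S \<subseteq> eval_word ` lists (UNIV \<times> S)"
    by (auto intro!: image_eqI[of _ _ "[(True, f)]" for f])
  then have "G \<subseteq> eval_word ` lists (UNIV \<times> S)"
    using S(3) diff_subgroup_words[OF assms(1) S(2)] by (auto simp: generated_subgroup_def)
  moreover have "countable (eval_word ` lists (UNIV \<times> S))"
    using S(1) by (intro countable_image countable_lists countable_finite) auto
  ultimately show ?thesis
    by (rule countable_subset)
qed

definition C1_near_id :: "real \<Rightarrow> (real \<Rightarrow> real) \<Rightarrow> bool" where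
  "C1_near_id \<epsilon> f \<longleftrightarrow> (\<forall>x\<in>{0..1}. dist (f x) x < \<epsilon> \<and> dist (D01 f x) 1 < \<epsilon>)"

lemma C1_to_id_iff:
  "C1_to_id fs \<longleftrightarrow> (\<forall>\<epsilon>>0. \<forall>\<^sub>F n in sequentially. C1_near_id \<epsilon> (fs n))"
  unfolding C1_to_id_def C1_near_id_def uniform_limit_iff
  by (auto simp: ball_conj_distrib eventually_conj_iff)

lemma C1_near_id_mono: "\<delta> \<le> \<epsilon> \<Longrightarrow> C1_near_id \<delta> f \<Longrightarrow> C1_near_id \<epsilon> f"
  unfolding C1_near_id_def by fastforce

lemma C1_close_id_subset: "C1_close_id G \<Longrightarrow> F \<subseteq> G \<Longrightarrow> C1_close_id F"
  unfolding C1_close_id_def by blast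

lemma C1_close_id_finite_approx:
  assumes "C1_close_id F" "finite F" "\<epsilon> > 0"
  shows "\<exists>h. diff1p h \<and> (\<forall>g\<in>F. C1_near_id \<epsilon> (h \<circ> g \<circ> inv h))"
proof -
  obtain hs where hs: "\<And>n. diff1p (hs n)" "\<And>g. g \<in> F \<Longrightarrow> C1_to_id (\<lambda>n. hs n \<circ> g \<circ> inv (hs n))"
    using assms(1) unfolding C1_close_id_def by blast
  have "\<forall>\<^sub>F n in sequentially. \<forall>g\<in>F. C1_near_id \<epsilon> (hs n \<circ> g \<circ> inv (hs n))"
    using hs(2) assms(2,3) by (intro eventually_ball_finite) (auto simp: C1_to_id_iff)
  then obtain n where "\<forall>g\<in>F. C1_near_id \<epsilon> (hs n \<circ> g \<circ> inv (hs n))"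
    using eventually_sequentially by auto
  with hs(1) show ?thesis by blast
qed

lemma C1_close_id_countable:
  assumes "countable G" and fin: "\<And>F. finite F \<Longrightarrow> F \<subseteq> G \<Longrightarrow> C1_close_id F"
  shows "C1_close_id G"
proof (cases "G = {}")
  case True
  then show ?thesis using fin[of "{}"] by simp
next
  case False
  define e where "e = from_nat_into G"
  have range_e: "range e = G"
    unfolding e_def using False assms(1) by (rule range_from_nat_into)
  have "\<exists>h. diff1p h \<and> (\<forall>g\<in>e ` {..k}. C1_near_id (inverse (real (Suc k))) (h \<circ> g \<circ> inv h))" for k
  proof (rule C1_close_id_finite_approx)
    show "C1_close_id (e ` {..k})"
      using range_e by (intro fin) auto
  qed simp_all
  then obtain H where H: "\<And>k. diff1p (H k)"
      "\<And>k. \<forall>g\<in>e ` {..k}. C1_near_id (inverse (real (Suc k))) (H k \<circ> g \<circ> inv (H k))"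
    by metis
  have "C1_to_id (\<lambda>k. H k \<circ> e i \<circ> inv (H k))" for i
    unfolding C1_to_id_iff
  proof (intro allI impI)
    fix \<epsilon> :: real assume "\<epsilon> > 0"
    have "\<forall>\<^sub>F k in sequentially. inverse (real (Suc k)) < \<epsilon>"
      using order_tendstoD(2)[OF LIMSEQ_inverse_real_of_nat \<open>\<epsilon> > 0\<close>] .
    then show "\<forall>\<^sub>F k in sequentially. C1_near_id \<epsilon> (H k \<circ> e i \<circ> inv (H k))"
      using eventually_ge_at_top[of i]
    proof eventually_elim
      case (elim k)
      then show ?case
        using C1_near_id_mono[OF less_imp_le] H(2)[of k] by blast
    qed
  qed
  then show ?thesis
    unfolding C1_close_id_def using H(1) range_e by blast
qed

lemma finite_subset_incseq_Union:
  assumes "incseq A" "finite F" "F \<subseteq> (\<Union>n. A n)"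
  shows "\<exists>n. F \<subseteq> A n"
  using assms(2,3)
proof (induction F rule: finite_induct)
  case empty then show ?case by simp
next
  case (insert x F)
  then obtain m n where "x \<in> A m" "F \<subseteq> A n" by auto
  then have "insert x F \<subseteq> A (max m n)"
    using monoD[OF assms(1), of m "max m n"] monoD[OF assms(1), of n "max m n"] by auto
  then show ?case ..
qed

theorem theoremt:
  fixes Gs :: "nat \<Rightarrow> (real \<Rightarrow> real) set"
  assumes "\<And>n. diff_subgroup (Gs n)"
    and "\<And>n. Gs n \<subseteq> Gs (Suc n)"
    and "\<And>n. fin_gen (Gs n)"
    and "\<And>n. C1_close_id (Gs n)"
  shows "C1_close_id (\<Union>n. Gs n)"
proof (rule C1_close_id_countable)
  show "countable (\<Union>n. Gs n)"
    using countable_fin_gen[OF assms(1,3)] by (intro countable_UN) auto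
next
  fix F assume "finite F" "F \<subseteq> (\<Union>n. Gs n)"
  moreover have "incseq Gs"
    using assms(2) by (rule incseq_SucI)
  ultimately obtain n where "F \<subseteq> Gs n"
    using finite_subset_incseq_Union by blast
  then show "C1_close_id F"
    by (rule C1_close_id_subset[OF assms(4)])
qed

end
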